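(* Let $G$ and $N$ be finitely presented groups and $Q$ a finite group. The following are equivalent: (1) there is a surjective homomorphism $G\to N\times Q$; (2) there is a surjective homomorphism $\tau:G\to Q$ and a $(Q,\tau)$-presentation $\langle\mathcal X\cup\mathcal Y\mid\mathcal R\rangle$ of $G$, with $\mathcal X=\{x_1,\dots,x_t\}$ and $\mathcal Y=\{y_1,\dots,y_\ell\}$, such that there is an assignment $x_j\mapsto h_j\in N$, $y_j\mapsto k_j\in N$ under which every relator $r\in\mathcal R$ evaluates to $1_N$ (each letter $x_j^{\pm1}$ replaced by $h_j^{\pm1}$, each $y_j^{\pm1}$ by $k_j^{\pm1}$) and $\langle k_1,\dots,k_\ell\rangle=N$.
   Context: Let $\tau:G\to Q$ be an epimorphism. A $(Q,\tau)$-presentation of $G$ is a presentation $\langle\mathcal X\cup\mathcal Y\mid\mathcal R\rangle$ of $G$ with $\mathcal X,\mathcal Y,\mathcal R$ finite, the generators in $\mathcal X$ representing elements of $G$ on which $\tau$ restricts to a bijection $\mathcal X\to Q$, and the elements represented by $\mathcal Y$ generating $\ker(\tau)$. (In the paper, condition (2) is phrased as: the problem "EquationsSubspan" answers Yes on input $N$ and the system of equations without constants obtained from $\mathcal R$ by replacing each $x_j$ by a variable $X_j$ and each $y_j$ by a variable $Y_j$, i.e. there is a solution $\sigma$ with $\langle\sigma(Y_1),\dots,\sigma(Y_\ell)\rangle=N$.) *)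

theory Defs
  imports "HOL-Algebra.Algebra"
begin

text \<open>Words over a generator alphabet: a letter is a pair (generator, sign),
  where sign True means the generator itself and False its inverse.\<close>

type_synonym 's word = "('s \<times> bool) list"

definition inv_letter :: "'s \<times> bool \<Rightarrow> 's \<times> bool" where
  "inv_letter l = (fst l, \<not> snd l)"

definition inv_word :: "'s word \<Rightarrow> 's word" where
  "inv_word w = rev (map inv_letter w)"

definition word_over :: "'s set \<Rightarrow> 's word \<Rightarrow> bool" where
  "word_over S w \<longleftrightarrow> (\<forall>l \<in> set w. fst l \<in> S)"

definition eval_word :: "('g, 'm) monoid_scheme \<Rightarrow> ('s \<Rightarrow> 'g) \<Rightarrow> 's word \<Rightarrow> 'g" where
  "eval_word G f w =
     foldr (\<lambda>l acc. (if snd l then f (fst l) else inv\<^bsub>G\<^esub> (f (fst l))) \<otimes>\<^bsub>G\<^esub> acc) w \<one>\<^bsub>G\<^esub>"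

text \<open>A word lies in the normal closure of R in the free group on S iff it can be
  transformed into the empty word by such insertions and their inverse deletions.\<close>

inductive insert_step :: "'s set \<Rightarrow> 's word set \<Rightarrow> 's word \<Rightarrow> 's word \<Rightarrow> bool"
  for S R where
  ins_pair: "fst x \<in> S \<Longrightarrow> insert_step S R (p @ q) (p @ [x, inv_letter x] @ q)"
| ins_rel: "r \<in> R \<Longrightarrow> insert_step S R (p @ q) (p @ r @ q)"
| ins_inv_rel: "r \<in> R \<Longrightarrow> insert_step S R (p @ q) (p @ inv_word r @ q)"

definition in_normal_closure :: "'s set \<Rightarrow> 's word set \<Rightarrow> 's word \<Rightarrow> bool" where
  "in_normal_closure S R w \<longleftrightarrow> (symclp (insert_step S R))\<^sup>*\<^sup>* w []"

definition is_presentation ::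
  "('g, 'm) monoid_scheme \<Rightarrow> 's set \<Rightarrow> ('s \<Rightarrow> 'g) \<Rightarrow> 's word set \<Rightarrow> bool" where
  "is_presentation G S g R \<longleftrightarrow>
     g ` S \<subseteq> carrier G \<and>
     generate G (g ` S) = carrier G \<and>
     (\<forall>r \<in> R. word_over S r \<and> eval_word G g r = \<one>\<^bsub>G\<^esub>) \<and>
     (\<forall>w. word_over S w \<longrightarrow> eval_word G g w = \<one>\<^bsub>G\<^esub> \<longrightarrow> in_normal_closure S R w)"

definition finitely_presented :: "('g, 'm) monoid_scheme \<Rightarrow> bool" where
  "finitely_presented G \<longleftrightarrow>
     (\<exists>(S :: nat set) g R. finite S \<and> finite R \<and> is_presentation G S g R)"

text \<open>A \<open>(Q,\<tau>)\<close>-presentation with generators x_j = Inl j (j < t) and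
  y_j = Inr j (j < l), the generator s representing g s in G.\<close>

definition XY_gens :: "nat \<Rightarrow> nat \<Rightarrow> (nat + nat) set" where
  "XY_gens t l = Inl ` {..<t} \<union> Inr ` {..<l}"

definition Q_tau_presentation ::
  "('g, 'm) monoid_scheme \<Rightarrow> ('q, 'k) monoid_scheme \<Rightarrow> ('g \<Rightarrow> 'q) \<Rightarrow>
   nat \<Rightarrow> nat \<Rightarrow> (nat + nat \<Rightarrow> 'g) \<Rightarrow> (nat + nat) word set \<Rightarrow> bool" where
  "Q_tau_presentation G Q \<tau> t l g R \<longleftrightarrow>
     finite R \<and>
     is_presentation G (XY_gens t l) g R \<and>
     bij_betw (\<lambda>j. \<tau> (g (Inl j))) {..<t} (carrier Q) \<and>
     generate G ((\<lambda>j. g (Inr j)) ` {..<l}) = kernel G Q \<tau>"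

end

theory Submission
  imports Defs
begin

(* A surjection G -> N x Q amounts to a surjection tau : G -> Q together with a homomorphism
   pi : G -> N that maps ker tau onto N. Given tau, Schreier's lemma shows that ker tau is
   generated by the finitely many elements x_q s x_(q tau(s))^-1, where x is a transversal of tau
   and s runs through the generators of G; a Tietze transformation turns a finite presentation
   of G into one on the transversal and these Schreier generators, i.e. a (Q,tau)-presentation.
   For any (Q,tau)-presentation, von Dyck's theorem identifies the homomorphisms pi : G -> N with
   the assignments of the generators under which all relators vanish, and pi maps ker tau = <Y>
   onto N exactly when the images of the y_j generate N. *)

definition eval_letter :: "('g, 'm) monoid_scheme \<Rightarrow> ('s \<Rightarrow> 'g) \<Rightarrow> 's \<times> bool \<Rightarrow> 'g" where
  "eval_letter G f l = (if snd l then f (fst l) else inv\<^bsub>G\<^esub> (f (fst l)))"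

lemma eval_word_Nil [simp]: "eval_word G f [] = \<one>\<^bsub>G\<^esub>"
  by (simp add: eval_word_def)

lemma eval_word_Cons [simp]: "eval_word G f (l # w) = eval_letter G f l \<otimes>\<^bsub>G\<^esub> eval_word G f w"
  by (simp add: eval_word_def eval_letter_def)

lemma word_over_simps [simp]:
  "word_over S []"
  "word_over S (l # w) \<longleftrightarrow> fst l \<in> S \<and> word_over S w"
  "word_over S (u @ v) \<longleftrightarrow> word_over S u \<and> word_over S v"
  "word_over UNIV w"
  by (auto simp: word_over_def)

lemma inv_letter_simps [simp]:
  "fst (inv_letter l) = fst l" "snd (inv_letter l) = (\<not> snd l)" "inv_letter (inv_letter l) = l"
  by (auto simp: inv_letter_def)

lemma inv_word_simps [simp]:
  "inv_word [] = []"
  "inv_word (l # w) = inv_word w @ [inv_letter l]"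
  "inv_word (u @ v) = inv_word v @ inv_word u"
  "inv_word (inv_word w) = w"
  by (auto simp: inv_word_def rev_map[symmetric] comp_def)

lemma word_over_inv_word [simp]: "word_over S (inv_word w) \<longleftrightarrow> word_over S w"
  by (auto simp: word_over_def inv_word_def)

lemma eval_word_cong:
  "(\<And>l. l \<in> set w \<Longrightarrow> f (fst l) = f' (fst l)) \<Longrightarrow> eval_word G f w = eval_word G f' w"
  by (induction w) (auto simp: eval_letter_def)

context group
begin

lemma eval_letter_closed: "f ` S \<subseteq> carrier G \<Longrightarrow> fst l \<in> S \<Longrightarrow> eval_letter G f l \<in> carrier G"
  by (auto simp: eval_letter_def)

lemma eval_word_closed: "f ` S \<subseteq> carrier G \<Longrightarrow> word_over S w \<Longrightarrow> eval_word G f w \<in> carrier G"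
  by (induction w) (auto intro!: eval_letter_closed)

lemma eval_word_append:
  "f ` S \<subseteq> carrier G \<Longrightarrow> word_over S u \<Longrightarrow> word_over S v \<Longrightarrow>
   eval_word G f (u @ v) = eval_word G f u \<otimes> eval_word G f v"
  by (induction u) (auto simp: m_assoc eval_letter_closed eval_word_closed)

lemma eval_letter_inv_letter:
  "f ` S \<subseteq> carrier G \<Longrightarrow> fst l \<in> S \<Longrightarrow> eval_letter G f (inv_letter l) = inv (eval_letter G f l)"
  by (auto simp: eval_letter_def)

lemma eval_word_inv_word:
  assumes "f ` S \<subseteq> carrier G" "word_over S w"
  shows "eval_word G f (inv_word w) = inv (eval_word G f w)"
  using assms(2)
proof (induction w)
  case (Cons l w)
  then have "eval_letter G f l \<in> carrier G" "eval_word G f w \<in> carrier G"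
    using assms(1) by (auto intro: eval_letter_closed eval_word_closed)
  with Cons assms(1) show ?case
    by (simp add: eval_word_append eval_letter_inv_letter inv_mult_group)
qed simp

lemma ex_word_of_generate:
  assumes "g ` S \<subseteq> carrier G" "x \<in> generate G (g ` S)"
  shows "\<exists>w. word_over S w \<and> eval_word G g w = x"
  using assms(2)
proof (induction rule: generate.induct)
  case one
  show ?case by (intro exI[of _ "[]"]) simp
next
  case (incl h)
  then obtain s where "s \<in> S" "h = g s" by auto
  with assms(1) show ?case by (intro exI[of _ "[(s, True)]"]) (auto simp: eval_letter_def)
next
  case (inv h)
  then obtain s where "s \<in> S" "h = g s" by auto
  with assms(1) show ?case by (intro exI[of _ "[(s, False)]"]) (auto simp: eval_letter_def)
next
  case (eng h1 h2)
  then obtain w1 w2 where "word_over S w1" "eval_word G g w1 = h1"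
    and "word_over S w2" "eval_word G g w2 = h2"
    by auto
  with assms(1) show ?case by (intro exI[of _ "w1 @ w2"]) (auto simp: eval_word_append)
qed

end

lemma (in group_hom) hom_eval_word:
  assumes "f ` S \<subseteq> carrier G" "word_over S w"
  shows "h (eval_word G f w) = eval_word H (\<lambda>s. h (f s)) w"
  using assms(2)
proof (induction w)
  case (Cons l w)
  then have "eval_letter G f l \<in> carrier G" "eval_word G f w \<in> carrier G"
    "h (eval_letter G f l) = eval_letter H (\<lambda>s. h (f s)) l"
    using assms(1) by (auto intro: G.eval_letter_closed G.eval_word_closed simp: eval_letter_def)
  with Cons show ?case by simp
qed simp

definition word_subst :: "('s \<Rightarrow> 't word) \<Rightarrow> 's word \<Rightarrow> 't word" where
  "word_subst \<rho> w = concat (map (\<lambda>l. if snd l then \<rho> (fst l) else inv_word (\<rho> (fst l))) w)"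

lemma word_subst_simps [simp]:
  "word_subst \<rho> [] = []"
  "word_subst \<rho> (l # w) = (if snd l then \<rho> (fst l) else inv_word (\<rho> (fst l))) @ word_subst \<rho> w"
  "word_subst \<rho> (u @ v) = word_subst \<rho> u @ word_subst \<rho> v"
  by (auto simp: word_subst_def)

lemma word_subst_inv_word [simp]: "word_subst \<rho> (inv_word w) = inv_word (word_subst \<rho> w)"
  by (induction w) auto

lemma word_subst_word_subst:
  "word_subst \<rho> (word_subst \<sigma> w) = word_subst (\<lambda>s. word_subst \<rho> (\<sigma> s)) w"
  by (induction w) auto

lemma word_over_word_subst:
  "word_over S w \<Longrightarrow> (\<And>s. s \<in> S \<Longrightarrow> word_over T (\<rho> s)) \<Longrightarrow> word_over T (word_subst \<rho> w)"
  by (induction w) auto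

lemma (in group) eval_word_subst:
  assumes "g ` T \<subseteq> carrier G" "\<And>s. s \<in> S \<Longrightarrow> word_over T (\<rho> s)"
    and "\<And>s. s \<in> S \<Longrightarrow> eval_word G g (\<rho> s) = f s" "word_over S w"
  shows "eval_word G g (word_subst \<rho> w) = eval_word G f w"
  using assms(4)
proof (induction w)
  case (Cons l w)
  then have "word_over T (word_subst \<rho> w)" "word_over T (\<rho> (fst l))"
    using assms(2) by (auto intro: word_over_word_subst)
  with Cons assms show ?case
    by (auto simp: eval_word_append eval_word_inv_word eval_letter_def)
qed simp

abbreviation word_equiv :: "'s set \<Rightarrow> 's word set \<Rightarrow> 's word \<Rightarrow> 's word \<Rightarrow> bool" where
  "word_equiv S R \<equiv> equivclp (insert_step S R)"

lemma in_normal_closure_iff: "in_normal_closure S R w \<longleftrightarrow> word_equiv S R w []"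
  by (simp add: in_normal_closure_def equivclp_def)

lemma insert_step_append_context:
  "insert_step S R u v \<Longrightarrow> insert_step S R (a @ u @ b) (a @ v @ b)"
proof (induction rule: insert_step.induct)
  case (ins_pair x p q)
  then show ?case using insert_step.ins_pair[of x S R "a @ p" "q @ b"] by simp
next
  case (ins_rel r p q)
  then show ?case using insert_step.ins_rel[of r R S "a @ p" "q @ b"] by simp
next
  case (ins_inv_rel r p q)
  then show ?case using insert_step.ins_inv_rel[of r R S "a @ p" "q @ b"] by simp
qed

lemma word_equiv_append_context:
  "word_equiv S R u v \<Longrightarrow> word_equiv S R (a @ u @ b) (a @ v @ b)"
proof (induction rule: equivclp_induct)
  case (step y z)
  then show ?case by (metis equivclp_into_equivclp insert_step_append_context)
qed simp

lemma word_equiv_append: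
  "word_equiv S R u u' \<Longrightarrow> word_equiv S R v v' \<Longrightarrow> word_equiv S R (u @ v) (u' @ v')"
  using word_equiv_append_context[of S R u u' "[]" v] word_equiv_append_context[of S R v v' u' "[]"]
  by (auto intro: equivclp_trans)

lemma word_equiv_cancel:
  "word_over S w \<Longrightarrow> word_equiv S R (a @ w @ inv_word w @ b) (a @ b)"
proof (induction w arbitrary: a b)
  case (Cons x w)
  have "word_equiv S R ((a @ [x]) @ w @ inv_word w @ ([inv_letter x] @ b))
                       ((a @ [x]) @ ([inv_letter x] @ b))"
    using Cons.IH[of "a @ [x]" "[inv_letter x] @ b"] Cons.prems by simp
  moreover have "word_equiv S R (a @ [x, inv_letter x] @ b) (a @ b)"
    using Cons.prems insert_step.ins_pair[of x S R a b] by auto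
  ultimately show ?case by (auto intro: equivclp_trans)
qed simp

lemma word_equiv_delete_relator: "r \<in> R \<Longrightarrow> word_equiv S R (a @ r @ b) (a @ b)"
  using insert_step.ins_rel[of r R S a b] by blast

lemma word_equiv_delete_inv_relator: "r \<in> R \<Longrightarrow> word_equiv S R (a @ inv_word r @ b) (a @ b)"
  using insert_step.ins_inv_rel[of r R S a b] by blast

lemma (in group) eval_word_insert_step:
  assumes "\<And>s. f s \<in> carrier G" "\<And>r. r \<in> R \<Longrightarrow> eval_word G f r = \<one>"
    and "insert_step S R u v"
  shows "eval_word G f u = eval_word G f v"
proof -
  have f: "range f \<subseteq> carrier G" using assms(1) by auto
  note eval_append = eval_word_append[OF f, simplified]
  note eval_closed = eval_word_closed[OF f, simplified]
  from assms(3) show ?thesis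
  proof cases
    case (ins_pair x p q)
    have "eval_letter G f x \<in> carrier G" using eval_letter_closed[OF f] by simp
    then have "eval_word G f ([x, inv_letter x] @ q) = eval_word G f q"
      using eval_closed[of q] by (simp add: eval_letter_inv_letter[OF f] m_assoc[symmetric])
    with ins_pair show ?thesis by (simp add: eval_append eval_closed)
  next
    case (ins_rel r p q)
    with assms(2) show ?thesis by (simp add: eval_append eval_closed)
  next
    case (ins_inv_rel r p q)
    with assms(2) show ?thesis by (simp add: eval_append eval_closed eval_word_inv_word[OF f])
  qed
qed

lemma (in group) eval_word_word_equiv:
  assumes "\<And>s. f s \<in> carrier G" "\<And>r. r \<in> R \<Longrightarrow> eval_word G f r = \<one>"
    and "word_equiv S R u v"
  shows "eval_word G f u = eval_word G f v"
  using assms(3)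
proof (induction rule: equivclp_induct)
  case (step y z)
  then show ?case using eval_word_insert_step[OF assms(1,2)] by metis
qed simp

lemma insert_step_word_subst:
  assumes "\<And>s. s \<in> S \<Longrightarrow> word_over T (\<rho> s)" "word_subst \<rho> ` R \<subseteq> R'"
    and "insert_step S R u v"
  shows "word_equiv T R' (word_subst \<rho> u) (word_subst \<rho> v)"
proof -
  from assms(3) have "word_equiv T R' (word_subst \<rho> v) (word_subst \<rho> u)"
  proof cases
    case (ins_pair x p q)
    let ?x = "if snd x then \<rho> (fst x) else inv_word (\<rho> (fst x))"
    have "word_over T ?x" using assms(1) ins_pair by auto
    then have "word_equiv T R' (word_subst \<rho> p @ ?x @ inv_word ?x @ word_subst \<rho> q)
                               (word_subst \<rho> p @ word_subst \<rho> q)"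
      by (rule word_equiv_cancel)
    moreover have "word_subst \<rho> v = word_subst \<rho> p @ ?x @ inv_word ?x @ word_subst \<rho> q"
      using ins_pair by auto
    ultimately show ?thesis using ins_pair(1) by (metis word_subst_simps(3))
  next
    case (ins_rel r p q)
    with assms(2) show ?thesis using word_equiv_delete_relator[of "word_subst \<rho> r" R'] by auto
  next
    case (ins_inv_rel r p q)
    with assms(2) show ?thesis using word_equiv_delete_inv_relator[of "word_subst \<rho> r" R'] by auto
  qed
  then show ?thesis by (rule equivclp_sym)
qed

lemma word_equiv_word_subst:
  assumes "\<And>s. s \<in> S \<Longrightarrow> word_over T (\<rho> s)" "word_subst \<rho> ` R \<subseteq> R'"
    and "word_equiv S R u v"
  shows "word_equiv T R' (word_subst \<rho> u) (word_subst \<rho> v)"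
  using assms(3)
proof (induction rule: equivclp_induct)
  case (step y z)
  from step.hyps(2) have "word_equiv T R' (word_subst \<rho> y) (word_subst \<rho> z)"
  proof
    assume "insert_step S R y z"
    from insert_step_word_subst[OF assms(1,2) this] show ?thesis .
  next
    assume "insert_step S R z y"
    from insert_step_word_subst[OF assms(1,2) this] show ?thesis by (rule equivclp_sym)
  qed
  with step.IH show ?case by (rule equivclp_trans)
qed simp

lemma word_equiv_word_subst_defining_relators:
  assumes "\<And>z. z \<in> S \<Longrightarrow> word_over S (\<rho> z)"
    and "\<And>z. z \<in> S \<Longrightarrow> (z, True) # inv_word (\<rho> z) \<in> R"
    and "word_over S w"
  shows "word_equiv S R w (word_subst \<rho> w)"
proof -
  have letter: "word_equiv S R [l] (word_subst \<rho> [l])" if "fst l \<in> S" for l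
  proof (cases l)
    case (Pair z b)
    have \<rho>z: "word_over S (\<rho> z)" using assms(1) that Pair by simp
    have rel: "[(z, True)] @ inv_word (\<rho> z) \<in> R" using assms(2) that Pair by simp
    show ?thesis
    proof (cases b)
      case True
      have "word_equiv S R ((z, True) # inv_word (\<rho> z) @ \<rho> z) [(z, True)]"
        using word_equiv_cancel[of S "inv_word (\<rho> z)" R "[(z, True)]" "[]"] \<rho>z by simp
      moreover have "word_equiv S R ((z, True) # inv_word (\<rho> z) @ \<rho> z) (\<rho> z)"
        using word_equiv_delete_relator[OF rel, of S "[]" "\<rho> z"] by simp
      ultimately have "word_equiv S R [(z, True)] (\<rho> z)"
        by (rule equivclp_trans[OF equivclp_sym])
      with Pair True show ?thesis by simp
    next
      case False
      have "word_equiv S R (inv_word (\<rho> z) @ \<rho> z @ [(z, False)]) [(z, False)]"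
        using word_equiv_cancel[of S "inv_word (\<rho> z)" R "[]" "[(z, False)]"] \<rho>z by simp
      moreover have "word_equiv S R (inv_word (\<rho> z) @ \<rho> z @ [(z, False)]) (inv_word (\<rho> z))"
        using word_equiv_delete_inv_relator[OF rel, of S "inv_word (\<rho> z)" "[]"]
        by (simp add: inv_letter_def)
      ultimately have "word_equiv S R [(z, False)] (inv_word (\<rho> z))"
        by (rule equivclp_trans[OF equivclp_sym])
      with Pair False show ?thesis by simp
    qed
  qed
  from assms(3) show ?thesis
  proof (induction w)
    case (Cons l w)
    then have "word_equiv S R ([l] @ w) (word_subst \<rho> [l] @ word_subst \<rho> w)"
      using letter by (intro word_equiv_append) auto
    then show ?case by simp
  qed simp
qed

section \<open>Von Dyck's theorem and Tietze transformations\<close>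

lemma eval_word_eq_if_presentation:
  assumes "group G" "group N" "is_presentation G S g R"
    and f: "f ` S \<subseteq> carrier N" "\<And>r. r \<in> R \<Longrightarrow> eval_word N f r = \<one>\<^bsub>N\<^esub>"
    and uv: "word_over S u" "word_over S v" "eval_word G g u = eval_word G g v"
  shows "eval_word N f u = eval_word N f v"
proof -
  interpret G: group G by fact
  interpret N: group N by fact
  have g: "g ` S \<subseteq> carrier G" and R: "\<And>r. r \<in> R \<Longrightarrow> word_over S r"
    and complete: "\<And>w. word_over S w \<Longrightarrow> eval_word G g w = \<one>\<^bsub>G\<^esub> \<Longrightarrow> in_normal_closure S R w"
    using assms(3) by (auto simp: is_presentation_def)
  \<comment> \<open>Derivations may pass through words with letters outside S, so f is extended to all letters.\<close>
  define f' where "f' s = (if s \<in> S then f s else \<one>\<^bsub>N\<^esub>)" for s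
  have f'_closed: "f' s \<in> carrier N" for s using f(1) by (auto simp: f'_def)
  then have f': "range f' \<subseteq> carrier N" by auto
  have f'_eq: "eval_word N f' w = eval_word N f w" if "word_over S w" for w
    using that by (intro eval_word_cong) (auto simp: f'_def word_over_def)
  have f'_R: "eval_word N f' r = \<one>\<^bsub>N\<^esub>" if "r \<in> R" for r
    using that R f'_eq f(2) by simp
  have "eval_word G g (u @ inv_word v) = \<one>\<^bsub>G\<^esub>"
    using uv g by (simp add: G.eval_word_append G.eval_word_inv_word G.eval_word_closed)
  with complete uv have "word_equiv S R (u @ inv_word v) []"
    by (simp add: in_normal_closure_iff)
  then have "eval_word N f' (u @ inv_word v) = \<one>\<^bsub>N\<^esub>"
    using N.eval_word_word_equiv[OF f'_closed f'_R] by fastforce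
  then have "eval_word N f' u \<otimes>\<^bsub>N\<^esub> inv\<^bsub>N\<^esub> (eval_word N f' v) = \<one>\<^bsub>N\<^esub>"
    by (simp add: N.eval_word_append[OF f'] N.eval_word_inv_word[OF f'])
  then have "eval_word N f' u = eval_word N f' v"
    using N.eval_word_closed[OF f'] by (metis N.inv_equality N.inv_inv N.inv_closed word_over_simps(4))
  with uv f'_eq show ?thesis by simp
qed

theorem von_Dyck:
  assumes "group G" "group N" "is_presentation G S g R"
    and f: "f ` S \<subseteq> carrier N" "\<And>r. r \<in> R \<Longrightarrow> eval_word N f r = \<one>\<^bsub>N\<^esub>"
  shows "\<exists>\<psi> \<in> hom G N. \<forall>s \<in> S. \<psi> (g s) = f s"
proof -
  interpret G: group G by fact
  interpret N: group N by fact
  have g: "g ` S \<subseteq> carrier G" "generate G (g ` S) = carrier G"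
    using assms(3) by (auto simp: is_presentation_def)
  define W where "W x = (SOME w. word_over S w \<and> eval_word G g w = x)" for x
  have W: "word_over S (W x) \<and> eval_word G g (W x) = x" if "x \<in> carrier G" for x
    unfolding W_def by (rule someI_ex) (use G.ex_word_of_generate[OF g(1)] g(2) that in simp)
  define \<psi> where "\<psi> x = eval_word N f (W x)" for x
  have \<psi>: "\<psi> (eval_word G g w) = eval_word N f w" if "word_over S w" for w
    unfolding \<psi>_def using W G.eval_word_closed[OF g(1) that] that
    by (intro eval_word_eq_if_presentation[OF assms]) auto
  have "\<psi> \<in> hom G N"
  proof (rule homI)
    fix x y assume "x \<in> carrier G" "y \<in> carrier G"
    with W have x: "word_over S (W x)" "eval_word G g (W x) = x"
      and y: "word_over S (W y)" "eval_word G g (W y) = y" by auto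
    from x(1) show "\<psi> x \<in> carrier N" unfolding \<psi>_def by (rule N.eval_word_closed[OF f(1)])
    have "\<psi> (x \<otimes>\<^bsub>G\<^esub> y) = \<psi> (eval_word G g (W x @ W y))"
      using x y g(1) by (simp add: G.eval_word_append)
    also have "\<dots> = eval_word N f (W x @ W y)"
      using x y by (simp add: \<psi>)
    also have "\<dots> = \<psi> x \<otimes>\<^bsub>N\<^esub> \<psi> y"
      using x y by (simp add: \<psi>_def N.eval_word_append[OF f(1)])
    finally show "\<psi> (x \<otimes>\<^bsub>G\<^esub> y) = \<psi> x \<otimes>\<^bsub>N\<^esub> \<psi> y" .
  qed
  moreover have "\<psi> (g s) = f s" if "s \<in> S" for s
    using \<psi>[of "[(s, True)]"] that g(1) f(1) by (auto simp: eval_letter_def image_subset_iff)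
  ultimately show ?thesis by blast
qed

lemma finite_presentation_change_generators:
  assumes "group G" "is_presentation G S g R" "finite R"
    and T: "finite T" "g' ` T \<subseteq> carrier G" "generate G (g' ` T) = carrier G"
  shows "\<exists>R'. finite R' \<and> is_presentation G T g' R'"
proof -
  interpret group G by fact
  have g: "g ` S \<subseteq> carrier G" "generate G (g ` S) = carrier G"
    and R: "\<And>r. r \<in> R \<Longrightarrow> word_over S r \<and> eval_word G g r = \<one>\<^bsub>G\<^esub>"
    and complete: "\<And>w. word_over S w \<Longrightarrow> eval_word G g w = \<one>\<^bsub>G\<^esub> \<Longrightarrow> in_normal_closure S R w"
    using assms(2) unfolding is_presentation_def by blast+
  have "\<forall>s \<in> S. \<exists>w. word_over T w \<and> eval_word G g' w = g s"
    using ex_word_of_generate[OF T(2)] T(3) g(1) by auto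
  then obtain \<rho> where \<rho>: "\<And>s. s \<in> S \<Longrightarrow> word_over T (\<rho> s) \<and> eval_word G g' (\<rho> s) = g s"
    by metis
  have "\<forall>z \<in> T. \<exists>w. word_over S w \<and> eval_word G g w = g' z"
    using ex_word_of_generate[OF g(1)] g(2) T(2) by auto
  then obtain \<sigma> where \<sigma>: "\<And>z. z \<in> T \<Longrightarrow> word_over S (\<sigma> z) \<and> eval_word G g (\<sigma> z) = g' z"
    by metis
  have subst_\<rho>: "word_over T (word_subst \<rho> w) \<and> eval_word G g' (word_subst \<rho> w) = eval_word G g w"
    if "word_over S w" for w
    using that \<rho> T(2) by (auto intro: word_over_word_subst eval_word_subst)
  have subst_\<sigma>: "word_over S (word_subst \<sigma> w) \<and> eval_word G g (word_subst \<sigma> w) = eval_word G g' w"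
    if "word_over T w" for w
    using that \<sigma> g(1) by (auto intro: word_over_word_subst eval_word_subst)
  define \<theta> where "\<theta> = (\<lambda>z. word_subst \<rho> (\<sigma> z))"
  have \<theta>: "word_over T (\<theta> z) \<and> eval_word G g' (\<theta> z) = g' z" if "z \<in> T" for z
    unfolding \<theta>_def using subst_\<rho> \<sigma> that by auto
  \<comment> \<open>the old relators rewritten over T, and relators z = \<theta> z expressing T through S\<close>
  define R' where "R' = word_subst \<rho> ` R \<union> (\<lambda>z. (z, True) # inv_word (\<theta> z)) ` T"
  have "word_over T r \<and> eval_word G g' r = \<one>\<^bsub>G\<^esub>" if "r \<in> R'" for r
    using that subst_\<rho> R \<theta> T(2)
    by (auto simp: R'_def eval_letter_def eval_word_inv_word[OF T(2)])
  moreover have "in_normal_closure T R' w" if w: "word_over T w" "eval_word G g' w = \<one>\<^bsub>G\<^esub>" for w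
  proof -
    have "word_equiv S R (word_subst \<sigma> w) []"
      using complete subst_\<sigma> w by (simp add: in_normal_closure_iff)
    then have "word_equiv T R' (word_subst \<rho> (word_subst \<sigma> w)) []"
      using word_equiv_word_subst[of S T \<rho> R R'] \<rho> by (force simp: R'_def)
    moreover have "word_equiv T R' w (word_subst \<theta> w)"
      using \<theta> w(1) by (intro word_equiv_word_subst_defining_relators) (auto simp: R'_def)
    ultimately show ?thesis
      unfolding in_normal_closure_iff \<theta>_def word_subst_word_subst by (rule equivclp_trans[rotated])
  qed
  moreover have "finite R'" using assms(3) T(1) by (simp add: R'_def)
  ultimately show ?thesis using T(2,3) by (auto simp: is_presentation_def)
qed

section \<open>Schreier generators\<close>

definition schreier_generators ::
  "('g, 'a) monoid_scheme \<Rightarrow> ('q, 'b) monoid_scheme \<Rightarrow> ('g \<Rightarrow> 'q) \<Rightarrow> ('q \<Rightarrow> 'g) \<Rightarrow> 'g set \<Rightarrow> 'g set"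
  where
  "schreier_generators G Q \<tau> x A =
     (\<lambda>(q, a). x q \<otimes>\<^bsub>G\<^esub> a \<otimes>\<^bsub>G\<^esub> inv\<^bsub>G\<^esub> (x (q \<otimes>\<^bsub>Q\<^esub> \<tau> a))) ` (carrier Q \<times> A)"

context group_hom
begin

lemma schreier_generators_subset_kernel:
  assumes "A \<subseteq> carrier G" "\<forall>q \<in> carrier H. x q \<in> carrier G \<and> h (x q) = q"
  shows "schreier_generators G H h x A \<subseteq> kernel G H h"
  using assms by (auto simp: schreier_generators_def kernel_def)

lemma schreier_product_in_generate:
  assumes A: "A \<subseteq> carrier G" and x: "\<forall>q \<in> carrier H. x q \<in> carrier G \<and> h (x q) = q"
    and "a \<in> generate G A" "q \<in> carrier H"
  shows "x q \<otimes> a \<otimes> inv (x (q \<otimes>\<^bsub>H\<^esub> h a)) \<in> generate G (schreier_generators G H h x A)"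
    (is "?s q a \<in> ?K")
  using assms(3,4)
proof (induction arbitrary: q rule: generate.induct)
  case one
  with x show ?case by (simp add: generate.one)
next
  case (incl a)
  then show ?case by (intro generate.incl) (auto simp: schreier_generators_def)
next
  case (inv a)
  define q' where "q' = q \<otimes>\<^bsub>H\<^esub> inv\<^bsub>H\<^esub> (h a)"
  have a: "a \<in> carrier G" using inv A by auto
  with inv have q': "q' \<in> carrier H" "q' \<otimes>\<^bsub>H\<^esub> h a = q" "q \<otimes>\<^bsub>H\<^esub> h (inv a) = q'"
    by (auto simp: q'_def H.m_assoc)
  have xq: "x q \<in> carrier G" "x q' \<in> carrier G" using x inv q' by auto
  have "?s q' a \<in> schreier_generators G H h x A"
    using inv q' by (force simp: schreier_generators_def)
  then have "inv (?s q' a) \<in> ?K" by (rule generate.inv)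
  moreover have "inv (?s q' a) = ?s q (inv a)"
    using a xq q' by (simp add: G.inv_mult_group G.m_assoc)
  ultimately show ?case by simp
next
  case (eng a b)
  have ab: "a \<in> carrier G" "b \<in> carrier G"
    using eng.hyps G.generate_in_carrier[OF A] by auto
  define q1 where "q1 = q \<otimes>\<^bsub>H\<^esub> h a"
  have q1: "q1 \<in> carrier H" "q1 \<otimes>\<^bsub>H\<^esub> h b = q \<otimes>\<^bsub>H\<^esub> h (a \<otimes> b)"
    using eng.prems ab by (auto simp: q1_def H.m_assoc)
  have "?s q a \<otimes> ?s q1 b \<in> ?K"
    using eng.IH eng.prems q1(1) unfolding q1_def by (blast intro: generate.eng)
  moreover have "?s q a \<otimes> ?s q1 b = ?s q (a \<otimes> b)"
    using ab x eng.prems q1 unfolding q1_def[symmetric]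
    by (simp add: G.m_assoc[symmetric]) (simp add: G.m_assoc)
  ultimately show ?case by simp
qed

lemma kernel_eq_generate_schreier_generators:
  assumes A: "A \<subseteq> carrier G" "generate G A = carrier G"
    and x: "\<forall>q \<in> carrier H. x q \<in> carrier G \<and> h (x q) = q"
  shows "kernel G H h = generate G (schreier_generators G H h x A)" (is "_ = ?K")
proof
  show "?K \<subseteq> kernel G H h"
    using schreier_generators_subset_kernel[OF A(1) x] subgroup_kernel
    by (rule G.generate_subgroup_incl)
next
  have K: "subgroup ?K G"
    using schreier_generators_subset_kernel[OF A(1) x]
    by (intro G.generate_is_subgroup) (auto simp: kernel_def)
  \<comment> \<open>x 1 lies in ?K, being the Schreier product of x 1 at q = 1\<close>
  have x1: "x \<one>\<^bsub>H\<^esub> \<in> carrier G" "h (x \<one>\<^bsub>H\<^esub>) = \<one>\<^bsub>H\<^esub>" using x by auto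
  with schreier_product_in_generate[OF A(1) x, of "x \<one>\<^bsub>H\<^esub>" "\<one>\<^bsub>H\<^esub>"] A(2)
  have "x \<one>\<^bsub>H\<^esub> \<in> ?K" by (simp add: G.m_assoc)
  show "kernel G H h \<subseteq> ?K"
  proof
    fix a assume "a \<in> kernel G H h"
    then have a: "a \<in> carrier G" "h a = \<one>\<^bsub>H\<^esub>" by (auto simp: kernel_def)
    with schreier_product_in_generate[OF A(1) x, of a "\<one>\<^bsub>H\<^esub>"] A(2)
    have "x \<one>\<^bsub>H\<^esub> \<otimes> a \<otimes> inv (x \<one>\<^bsub>H\<^esub>) \<in> ?K" by simp
    with K \<open>x \<one>\<^bsub>H\<^esub> \<in> ?K\<close>
    have "inv (x \<one>\<^bsub>H\<^esub>) \<otimes> (x \<one>\<^bsub>H\<^esub> \<otimes> a \<otimes> inv (x \<one>\<^bsub>H\<^esub>)) \<otimes> x \<one>\<^bsub>H\<^esub> \<in> ?K"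
      by (meson subgroup.m_closed subgroup.m_inv_closed)
    moreover have "inv (x \<one>\<^bsub>H\<^esub>) \<otimes> (x \<one>\<^bsub>H\<^esub> \<otimes> a \<otimes> inv (x \<one>\<^bsub>H\<^esub>)) \<otimes> x \<one>\<^bsub>H\<^esub> = a"
      using a x1 by (simp add: G.m_assoc[symmetric]) (simp add: G.m_assoc)
    ultimately show "a \<in> ?K" by simp
  qed
qed

lemma generate_transversal_union_kernel_generators:
  assumes T: "T \<subseteq> carrier G" "carrier H \<subseteq> h ` T" and Y: "generate G Y = kernel G H h"
  shows "generate G (T \<union> Y) = carrier G"
proof
  have "Y \<subseteq> carrier G"
    using Y generate.incl[of _ Y G] by (auto simp: kernel_def)
  with T show "generate G (T \<union> Y) \<subseteq> carrier G" by (intro G.generate_incl) auto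
next
  show "carrier G \<subseteq> generate G (T \<union> Y)"
  proof
    fix a assume a: "a \<in> carrier G"
    then have "h a \<in> h ` T" using T(2) by auto
    then obtain b where b: "b \<in> T" "h b = h a" by (auto simp: image_iff)
    with T(1) a have "inv b \<otimes> a \<in> kernel G H h" by (auto simp: kernel_def)
    then have "inv b \<otimes> a \<in> generate G (T \<union> Y)"
      using Y G.mono_generate[of Y "T \<union> Y"] by auto
    moreover from b(1) have "b \<in> generate G (T \<union> Y)" by (intro generate.incl) simp
    ultimately have "b \<otimes> (inv b \<otimes> a) \<in> generate G (T \<union> Y)" by (simp add: generate.eng)
    with a b T(1) show "a \<in> generate G (T \<union> Y)" by (auto simp: G.m_assoc[symmetric])
  qed
qed

end

section \<open>Epimorphisms onto a direct product\<close>

lemma epi_DirProd_iff: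
  assumes "group G" "group N" "group Q"
  shows "(\<lambda>x. (\<pi> x, \<tau> x)) \<in> epi G (N \<times>\<times> Q) \<longleftrightarrow>
         \<tau> \<in> epi G Q \<and> \<pi> \<in> hom G N \<and> \<pi> ` kernel G Q \<tau> = carrier N"
proof
  assume "(\<lambda>x. (\<pi> x, \<tau> x)) \<in> epi G (N \<times>\<times> Q)"
  then have hom: "\<pi> \<in> hom G N" "\<tau> \<in> hom G Q"
    and onto: "(\<lambda>x. (\<pi> x, \<tau> x)) ` carrier G = carrier N \<times> carrier Q"
    by (auto simp: epi_def hom_paired)
  interpret N: group N by fact
  interpret Q: group Q by fact
  have "carrier Q \<subseteq> \<tau> ` carrier G"
  proof
    fix q assume "q \<in> carrier Q"
    with onto have "(\<one>\<^bsub>N\<^esub>, q) \<in> (\<lambda>x. (\<pi> x, \<tau> x)) ` carrier G" by simp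
    then show "q \<in> \<tau> ` carrier G" by force
  qed
  moreover have "carrier N \<subseteq> \<pi> ` kernel G Q \<tau>"
  proof
    fix n assume "n \<in> carrier N"
    with onto have "(n, \<one>\<^bsub>Q\<^esub>) \<in> (\<lambda>x. (\<pi> x, \<tau> x)) ` carrier G" by simp
    then show "n \<in> \<pi> ` kernel G Q \<tau>" by (force simp: kernel_def)
  qed
  ultimately show "\<tau> \<in> epi G Q \<and> \<pi> \<in> hom G N \<and> \<pi> ` kernel G Q \<tau> = carrier N"
    using hom hom_carrier[OF hom(1)] by (auto simp: epi_iff_subset kernel_def)
next
  assume "\<tau> \<in> epi G Q \<and> \<pi> \<in> hom G N \<and> \<pi> ` kernel G Q \<tau> = carrier N"
  then have \<tau>: "\<tau> \<in> hom G Q" "\<tau> ` carrier G = carrier Q"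
    and \<pi>: "\<pi> \<in> hom G N" "\<pi> ` kernel G Q \<tau> = carrier N"
    by (auto simp: epi_def)
  interpret \<tau>: group_hom G Q \<tau> using assms \<tau>(1) by (simp add: group_hom_def group_hom_axioms_def)
  interpret \<pi>: group_hom G N \<pi> using assms \<pi>(1) by (simp add: group_hom_def group_hom_axioms_def)
  have "carrier N \<times> carrier Q \<subseteq> (\<lambda>x. (\<pi> x, \<tau> x)) ` carrier G"
  proof clarify
    fix n q assume nq: "n \<in> carrier N" "q \<in> carrier Q"
    then obtain a where a: "a \<in> carrier G" "\<tau> a = q" using \<tau>(2) by (metis imageE)
    \<comment> \<open>correct the first coordinate by a kernel element, which leaves the second unchanged\<close>
    have "n \<otimes>\<^bsub>N\<^esub> inv\<^bsub>N\<^esub> (\<pi> a) \<in> \<pi> ` kernel G Q \<tau>" using \<pi>(2) nq a by simp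
    then obtain b where b: "b \<in> carrier G" "\<tau> b = \<one>\<^bsub>Q\<^esub>" "\<pi> b = n \<otimes>\<^bsub>N\<^esub> inv\<^bsub>N\<^esub> (\<pi> a)"
      by (auto simp: kernel_def)
    with a nq have "(n, q) = (\<pi> (b \<otimes>\<^bsub>G\<^esub> a), \<tau> (b \<otimes>\<^bsub>G\<^esub> a))" by (simp add: \<pi>.H.m_assoc)
    with a b show "(n, q) \<in> (\<lambda>x. (\<pi> x, \<tau> x)) ` carrier G" by blast
  qed
  then show "(\<lambda>x. (\<pi> x, \<tau> x)) \<in> epi G (N \<times>\<times> Q)"
    using \<tau>(1) \<pi>(1) by (simp add: epi_iff_subset hom_paired)
qed

lemma ex_epi_DirProd_iff:
  assumes "group G" "group N" "group Q"
  shows "(\<exists>\<phi>. \<phi> \<in> epi G (N \<times>\<times> Q)) \<longleftrightarrow>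
         (\<exists>\<tau> \<in> epi G Q. \<exists>\<pi> \<in> hom G N. \<pi> ` kernel G Q \<tau> = carrier N)"
proof
  assume "\<exists>\<phi>. \<phi> \<in> epi G (N \<times>\<times> Q)"
  then obtain \<phi> where "\<phi> \<in> epi G (N \<times>\<times> Q)" by blast
  then have "(\<lambda>x. (fst (\<phi> x), snd (\<phi> x))) \<in> epi G (N \<times>\<times> Q)" by simp
  then have "(\<lambda>x. snd (\<phi> x)) \<in> epi G Q \<and> (\<lambda>x. fst (\<phi> x)) \<in> hom G N \<and>
      (\<lambda>x. fst (\<phi> x)) ` kernel G Q (\<lambda>x. snd (\<phi> x)) = carrier N"
    by (rule epi_DirProd_iff[OF assms, THEN iffD1])
  then show "\<exists>\<tau> \<in> epi G Q. \<exists>\<pi> \<in> hom G N. \<pi> ` kernel G Q \<tau> = carrier N" by blast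
next
  assume "\<exists>\<tau> \<in> epi G Q. \<exists>\<pi> \<in> hom G N. \<pi> ` kernel G Q \<tau> = carrier N"
  then obtain \<tau> \<pi> where "\<tau> \<in> epi G Q" "\<pi> \<in> hom G N" "\<pi> ` kernel G Q \<tau> = carrier N" by blast
  then have "(\<lambda>x. (\<pi> x, \<tau> x)) \<in> epi G (N \<times>\<times> Q)"
    by (intro epi_DirProd_iff[OF assms, THEN iffD2]) simp
  then show "\<exists>\<phi>. \<phi> \<in> epi G (N \<times>\<times> Q)" by blast
qed

lemma ex_Q_tau_presentation:
  assumes "group G" "group Q" "finitely_presented G" "finite (carrier Q)" "\<tau> \<in> epi G Q"
  shows "\<exists>t l g R. Q_tau_presentation G Q \<tau> t l g R"
proof -
  interpret group_hom G Q \<tau>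
    using assms by (simp add: group_hom_def group_hom_axioms_def epi_def)
  obtain S :: "nat set" and g0 R0 where S: "finite S" "finite R0" "is_presentation G S g0 R0"
    using assms(3) by (auto simp: finitely_presented_def)
  then have g0: "g0 ` S \<subseteq> carrier G" "generate G (g0 ` S) = carrier G"
    unfolding is_presentation_def by blast+
  define x where "x q = (SOME a. a \<in> carrier G \<and> \<tau> a = q)" for q
  have x: "\<forall>q \<in> carrier Q. x q \<in> carrier G \<and> \<tau> (x q) = q"
  proof
    fix q assume "q \<in> carrier Q"
    with assms(5) have "q \<in> \<tau> ` carrier G" by (simp add: epi_def)
    then have "\<exists>a. a \<in> carrier G \<and> \<tau> a = q" by blast
    then show "x q \<in> carrier G \<and> \<tau> (x q) = q" unfolding x_def by (rule someI_ex)
  qed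
  define Y where "Y = schreier_generators G Q \<tau> x (g0 ` S)"
  have Y: "finite Y" "Y \<subseteq> carrier G" "generate G Y = kernel G Q \<tau>"
    using assms(4) S(1) schreier_generators_subset_kernel[OF g0(1) x]
      kernel_eq_generate_schreier_generators[OF g0 x]
    by (auto simp: Y_def schreier_generators_def kernel_def)
  define t where "t = card (carrier Q)"
  define l where "l = card Y"
  obtain e where e: "bij_betw e {..<t} (carrier Q)"
    using ex_bij_betw_nat_finite[OF assms(4)] by (auto simp: t_def atLeast0LessThan)
  obtain y where y: "bij_betw y {..<l} Y"
    using ex_bij_betw_nat_finite[OF Y(1)] by (auto simp: l_def atLeast0LessThan)
  define g where "g = case_sum (\<lambda>j. x (e j)) y"
  have Inl: "(\<lambda>j. g (Inl j)) ` {..<t} = x ` carrier Q"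
    using e by (auto simp: g_def bij_betw_def image_image[of x e, symmetric])
  have Inr: "(\<lambda>j. g (Inr j)) ` {..<l} = Y"
    using y by (simp add: g_def bij_betw_def)
  have XY: "g ` XY_gens t l = x ` carrier Q \<union> Y"
    by (simp add: XY_gens_def image_Un image_image Inl Inr)
  have "carrier Q \<subseteq> \<tau> ` x ` carrier Q" using x by (force simp: image_image)
  with x Y(3) have "generate G (g ` XY_gens t l) = carrier G"
    unfolding XY by (intro generate_transversal_union_kernel_generators) auto
  moreover have "g ` XY_gens t l \<subseteq> carrier G" using XY x Y(2) by auto
  moreover have "finite (XY_gens t l)" by (simp add: XY_gens_def)
  ultimately obtain R where "finite R" "is_presentation G (XY_gens t l) g R"
    using finite_presentation_change_generators[OF assms(1) S(3,2)] by blast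
  moreover have "\<tau> (g (Inl j)) = e j" if "j < t" for j
    using e x that by (auto simp: g_def bij_betw_def)
  with e have "bij_betw (\<lambda>j. \<tau> (g (Inl j))) {..<t} (carrier Q)"
    using bij_betw_cong[of "{..<t}" "\<lambda>j. \<tau> (g (Inl j))" e] by simp
  ultimately show ?thesis
    using Inr Y(3) unfolding Q_tau_presentation_def by blast
qed

lemma Q_tau_presentation_hom_image_kernel:
  assumes "group G" "group N" "Q_tau_presentation G Q \<tau> t l g R" "\<pi> \<in> hom G N"
  shows "\<pi> ` kernel G Q \<tau> = generate N ((\<lambda>j. \<pi> (g (Inr j))) ` {..<l})"
proof -
  interpret group_hom G N \<pi>
    using assms(1,2,4) by (simp add: group_hom_def group_hom_axioms_def)
  have "(\<lambda>j. g (Inr j)) ` {..<l} \<subseteq> carrier G"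
    using assms(3) by (auto simp: Q_tau_presentation_def is_presentation_def XY_gens_def)
  from generate_img[OF this] assms(3) show ?thesis
    by (simp add: Q_tau_presentation_def image_image)
qed

lemma Q_tau_presentation_hom_onto_kernel_iff:
  assumes "group G" "group N" "Q_tau_presentation G Q \<tau> t l g R"
  shows "(\<exists>\<pi> \<in> hom G N. \<pi> ` kernel G Q \<tau> = carrier N) \<longleftrightarrow>
         (\<exists>h k. (\<forall>j<t. h j \<in> carrier N) \<and> (\<forall>j<l. k j \<in> carrier N) \<and>
                (\<forall>r\<in>R. eval_word N (case_sum h k) r = \<one>\<^bsub>N\<^esub>) \<and>
                generate N (k ` {..<l}) = carrier N)"
proof -
  have P: "is_presentation G (XY_gens t l) g R"
    using assms(3) by (simp add: Q_tau_presentation_def)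
  then have g: "g ` XY_gens t l \<subseteq> carrier G" by (simp add: is_presentation_def)
  note image_kernel = Q_tau_presentation_hom_image_kernel[OF assms]
  show ?thesis
  proof
    assume "\<exists>\<pi> \<in> hom G N. \<pi> ` kernel G Q \<tau> = carrier N"
    then obtain \<pi> where \<pi>: "\<pi> \<in> hom G N" "\<pi> ` kernel G Q \<tau> = carrier N" by blast
    interpret group_hom G N \<pi>
      using assms(1,2) \<pi>(1) by (simp add: group_hom_def group_hom_axioms_def)
    have "case_sum (\<lambda>j. \<pi> (g (Inl j))) (\<lambda>j. \<pi> (g (Inr j))) = (\<lambda>s. \<pi> (g s))"
      by (auto split: sum.split)
    moreover have "eval_word N (\<lambda>s. \<pi> (g s)) r = \<one>\<^bsub>N\<^esub>" if "r \<in> R" for r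
    proof -
      have "word_over (XY_gens t l) r" "eval_word G g r = \<one>\<^bsub>G\<^esub>"
        using P that by (auto simp: is_presentation_def)
      from hom_eval_word[OF g this(1)] this(2) show ?thesis by simp
    qed
    moreover have "\<pi> (g s) \<in> carrier N" if "s \<in> XY_gens t l" for s
      using g that by auto
    ultimately show "\<exists>h k. (\<forall>j<t. h j \<in> carrier N) \<and> (\<forall>j<l. k j \<in> carrier N) \<and>
                (\<forall>r\<in>R. eval_word N (case_sum h k) r = \<one>\<^bsub>N\<^esub>) \<and>
                generate N (k ` {..<l}) = carrier N"
      using \<pi> image_kernel by (intro exI[of _ "\<lambda>j. \<pi> (g (Inl j))"] exI[of _ "\<lambda>j. \<pi> (g (Inr j))"])
        (auto simp: XY_gens_def)
  next
    assume "\<exists>h k. (\<forall>j<t. h j \<in> carrier N) \<and> (\<forall>j<l. k j \<in> carrier N) \<and>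
                (\<forall>r\<in>R. eval_word N (case_sum h k) r = \<one>\<^bsub>N\<^esub>) \<and>
                generate N (k ` {..<l}) = carrier N"
    then obtain h k where hk: "\<forall>j<t. h j \<in> carrier N" "\<forall>j<l. k j \<in> carrier N"
      and R: "\<forall>r\<in>R. eval_word N (case_sum h k) r = \<one>\<^bsub>N\<^esub>" and k: "generate N (k ` {..<l}) = carrier N"
      by blast
    from hk have f: "case_sum h k ` XY_gens t l \<subseteq> carrier N" by (auto simp: XY_gens_def)
    obtain \<pi> where \<pi>: "\<pi> \<in> hom G N" "\<forall>s \<in> XY_gens t l. \<pi> (g s) = case_sum h k s"
      using von_Dyck[OF assms(1,2) P f] R by blast
    then have "(\<lambda>j. \<pi> (g (Inr j))) ` {..<l} = k ` {..<l}" by (force simp: XY_gens_def)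
    with image_kernel[OF \<pi>(1)] k have "\<pi> ` kernel G Q \<tau> = carrier N" by simp
    with \<pi>(1) show "\<exists>\<pi> \<in> hom G N. \<pi> ` kernel G Q \<tau> = carrier N" by blast
  qed
qed

theorem lemma3p2:
  fixes G :: "'g monoid" and N :: "'n monoid" and Q :: "'q monoid"
  assumes "group G" and "group N" and "group Q"
    and "finitely_presented G" and "finitely_presented N"
    and "finite (carrier Q)"
  shows "(\<exists>\<phi>. \<phi> \<in> epi G (N \<times>\<times> Q)) \<longleftrightarrow>
         (\<exists>\<tau> t l g R. \<tau> \<in> epi G Q \<and> Q_tau_presentation G Q \<tau> t l g R \<and>
            (\<exists>h k. (\<forall>j<t. h j \<in> carrier N) \<and> (\<forall>j<l. k j \<in> carrier N) \<and>
                   (\<forall>r\<in>R. eval_word N (case_sum h k) r = \<one>\<^bsub>N\<^esub>) \<and>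
                   generate N (k ` {..<l}) = carrier N))"
proof -
  have "(\<exists>\<phi>. \<phi> \<in> epi G (N \<times>\<times> Q)) \<longleftrightarrow>
        (\<exists>\<tau> \<in> epi G Q. \<exists>\<pi> \<in> hom G N. \<pi> ` kernel G Q \<tau> = carrier N)"
    using assms(1-3) by (rule ex_epi_DirProd_iff)
  also have "\<dots> \<longleftrightarrow> (\<exists>\<tau> t l g R. \<tau> \<in> epi G Q \<and> Q_tau_presentation G Q \<tau> t l g R \<and>
                       (\<exists>\<pi> \<in> hom G N. \<pi> ` kernel G Q \<tau> = carrier N))"
    using ex_Q_tau_presentation[OF assms(1,3,4,6)] by meson
  also have "\<dots> \<longleftrightarrow> (\<exists>\<tau> t l g R. \<tau> \<in> epi G Q \<and> Q_tau_presentation G Q \<tau> t l g R \<and>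
            (\<exists>h k. (\<forall>j<t. h j \<in> carrier N) \<and> (\<forall>j<l. k j \<in> carrier N) \<and>
                   (\<forall>r\<in>R. eval_word N (case_sum h k) r = \<one>\<^bsub>N\<^esub>) \<and>
                   generate N (k ` {..<l}) = carrier N))"
    by (intro ex_cong1 conj_cong refl) (rule Q_tau_presentation_hom_onto_kernel_iff[OF assms(1,2)])
  finally show ?thesis .
qed

end
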